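(* Consider a cellular network with $n$ base stations $\mathcal{N}=\{1,\dots,n\}$, base station $i$ serving a nonempty set $\mathcal{J}_i$ of users (pairwise disjoint), channel gains $g_{kj}>0$, noise power $\sigma^2>0$, and $$f_i(\mathbf{x};\mathbf{r},\mathbf{p})=\sum_{j\in\mathcal{J}_i}\frac{r_{ij}}{\log\Big(1+\frac{p_i g_{ij}}{\sum_{k\ne i} p_k g_{kj} x_k+\sigma^2}\Big)}.$$ Let $\mathbf{r}>\mathbf{0}$ be a satisfiable rate vector and suppose the load $\mathbf{x}$ is implementable with power $\mathbf{p}$ and rate $\mathbf{r}$, i.e., $\mathbf{x}=\mathbf{f}(\mathbf{x};\mathbf{r},\mathbf{p})$. Then, for any norm $\|\cdot\|$ on $\mathbb{R}^n$, there exists $\delta>0$ such that any load vector $\mathbf{x}'$ with $\|\mathbf{x}'-\mathbf{x}\|\le\delta$ is implementable. Moreover, the implementable load region $\mathcal{L}=\{\mathbf{x}\ge\mathbf{0}:\ \mathbf{x}=\mathbf{f}(\mathbf{x};\mathbf{r},\mathbf{p})\ \text{for some}\ \mathbf{p}\ge\mathbf{0}\}$ is open.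
   Context: Vector inequalities are componentwise; $\log$ is natural logarithm. A rate vector $\mathbf{r}$ is satisfiable if $\rho(\mathbf{\Lambda}(\mathbf{r}))<1$, where $\rho$ is the spectral radius and $\mathbf{\Lambda}(\mathbf{r})$ has entries $\lambda_{ii}=0$ and $\lambda_{ik}=\sum_{j\in\mathcal{J}_i}g_{kj}r_{ij}/g_{ij}$ for $i\ne k$. Given satisfiable $\mathbf{r}$, a load $\mathbf{x}$ is implementable if there exists a power vector $\mathbf{p}$ with $\mathbf{x}=\mathbf{f}(\mathbf{x};\mathbf{r},\mathbf{p})$. *)

theory Defs
  imports "HOL-Analysis.Analysis"
begin

text \<open>Base stations are indexed by a finite type 'n (so loads, powers live in real^'n),
users by a type 'u; J i is the set of users served by base station i,
g k j the channel gain from base station k to user j, r i j the rate of user j at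
base station i, sigma2 the noise power.\<close>

definition cplx_eigenvalues :: "real^'n^'n \<Rightarrow> complex set" where
  "cplx_eigenvalues A = {l. \<exists>v :: complex^'n. v \<noteq> 0 \<and>
      (\<chi> i k. complex_of_real (A $ i $ k)) *v v = l *s v}"

definition spectral_radius :: "real^'n^'n \<Rightarrow> real" where
  "spectral_radius A = Max (cmod ` cplx_eigenvalues A)"

definition Lambda_mat :: "('n::finite \<Rightarrow> 'u set) \<Rightarrow> ('n \<Rightarrow> 'u \<Rightarrow> real) \<Rightarrow> ('n \<Rightarrow> 'u \<Rightarrow> real) \<Rightarrow> real^'n^'n" where
  "Lambda_mat J g r = (\<chi> i k. if i = k then 0 else (\<Sum>j\<in>J i. g k j * r i j / g i j))"

definition satisfiable :: "('n::finite \<Rightarrow> 'u set) \<Rightarrow> ('n \<Rightarrow> 'u \<Rightarrow> real) \<Rightarrow> ('n \<Rightarrow> 'u \<Rightarrow> real) \<Rightarrow> bool" where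
  "satisfiable J g r \<longleftrightarrow> spectral_radius (Lambda_mat J g r) < 1"

definition load_map :: "('n::finite \<Rightarrow> 'u set) \<Rightarrow> ('n \<Rightarrow> 'u \<Rightarrow> real) \<Rightarrow> real
    \<Rightarrow> real^'n \<Rightarrow> ('n \<Rightarrow> 'u \<Rightarrow> real) \<Rightarrow> real^'n \<Rightarrow> real^'n" where
  "load_map J g sigma2 x r p = (\<chi> i. \<Sum>j\<in>J i. r i j /
      ln (1 + p $ i * g i j / ((\<Sum>k\<in>UNIV - {i}. p $ k * g k j * x $ k) + sigma2)))"

text \<open>A zero power p_i makes f_i infinite in the paper, so the admissible powers are
the strictly positive ones (this avoids Isabelle's convention x/0 = 0).\<close>
definition implementable :: "('n::finite \<Rightarrow> 'u set) \<Rightarrow> ('n \<Rightarrow> 'u \<Rightarrow> real) \<Rightarrow> real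
    \<Rightarrow> ('n \<Rightarrow> 'u \<Rightarrow> real) \<Rightarrow> real^'n \<Rightarrow> bool" where
  "implementable J g sigma2 r x \<longleftrightarrow> (\<forall>i. 0 \<le> x $ i) \<and>
      (\<exists>p. (\<forall>i. 0 < p $ i) \<and> x = load_map J g sigma2 x r p)"

definition is_norm :: "(real^'n \<Rightarrow> real) \<Rightarrow> bool" where
  "is_norm N \<longleftrightarrow> (\<forall>x. N x = 0 \<longleftrightarrow> x = 0) \<and> (\<forall>x y. N (x + y) \<le> N x + N y)
      \<and> (\<forall>c x. N (c *\<^sub>R x) = \<bar>c\<bar> * N x)"

end

theory Submission
  imports Defs
begin

text \<open>The load of station i, as a function of its own power t with all other powers fixed, is
  a sum of terms r / ln(1 + t c) and so decreases continuously from +\<infinity> to 0; hence there is a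
  unique power carrying a prescribed load y_i, and this required power is monotone in the other
  stations' powers. At an implementable load x with power p, doubling all powers strictly
  lowers every load, since 2 p_i g / (2A + sigma2) > p_i g / (A + sigma2). By continuity the
  doubled power P still yields loads below y for every y near x, so the required-power map
  sends P below itself; Knaster-Tarski on the box [0, P] then gives a power vector that
  implements y. All norms on real^n being equivalent, this neighbourhood contains a ball of
  any norm.\<close>

definition rate_load :: "'u set \<Rightarrow> ('u \<Rightarrow> real) \<Rightarrow> ('u \<Rightarrow> real) \<Rightarrow> real" where
  "rate_load A r u = (\<Sum>j\<in>A. r j / ln (1 + u j))"

lemma divide_ln_add_one_strict_antimono:
  fixes r u u' :: real
  assumes "0 < r" "0 < u" "u < u'"
  shows "r / ln (1 + u') < r / ln (1 + u)"
  using assms by (intro divide_strict_left_mono) auto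

lemma divide_ln_add_one_antimono:
  fixes r u u' :: real
  assumes "0 \<le> r" "0 < u" "u \<le> u'"
  shows "r / ln (1 + u') \<le> r / ln (1 + u)"
  using assms by (intro divide_left_mono) auto

context
  fixes A :: "'u set" and r :: "'u \<Rightarrow> real"
  assumes A_fin: "finite A" and A_ne: "A \<noteq> {}" and r_pos: "\<And>j. j \<in> A \<Longrightarrow> 0 < r j"
begin

lemma rate_load_pos: "(\<And>j. j \<in> A \<Longrightarrow> 0 < u j) \<Longrightarrow> 0 < rate_load A r u"
  unfolding rate_load_def using r_pos by (intro sum_pos[OF A_fin A_ne] divide_pos_pos ln_gt_zero) auto

lemma rate_load_strict_antimono:
  assumes "\<And>j. j \<in> A \<Longrightarrow> 0 < u j \<and> u j < u' j"
  shows "rate_load A r u' < rate_load A r u"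
  unfolding rate_load_def using assms r_pos
  by (intro sum_strict_mono[OF A_fin A_ne] divide_ln_add_one_strict_antimono) auto

lemma rate_load_antimono:
  assumes "\<And>j. j \<in> A \<Longrightarrow> 0 < u j \<and> u j \<le> u' j"
  shows "rate_load A r u' \<le> rate_load A r u"
  unfolding rate_load_def using assms r_pos
  by (intro sum_mono divide_ln_add_one_antimono) (auto intro: less_imp_le)

lemma continuous_on_rate_load_scaled:
  assumes c: "\<forall>j\<in>A. 0 < c j"
  shows "continuous_on {0<..} (\<lambda>t. rate_load A r (\<lambda>j. t * c j))"
  unfolding rate_load_def
proof (intro continuous_intros ballI)
  fix j and t :: real assume "j \<in> A" "t \<in> {0<..}"
  then have "0 < t * c j" using c by simp
  then show "1 + t * c j \<noteq> 0" and "ln (1 + t * c j) \<noteq> 0" by auto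
qed

lemma rate_load_scaled_ge:
  assumes c: "\<forall>j\<in>A. 0 < c j" and v: "0 < v"
  obtains t where "0 < t" "v \<le> rate_load A r (\<lambda>j. t * c j)"
proof -
  obtain j0 where j0: "j0 \<in> A" using A_ne by blast
  define t where "t = r j0 / (c j0 * v)"
  have "0 < t" unfolding t_def using r_pos[OF j0] bspec[OF c j0] v by simp
  have u: "t * c j0 = r j0 / v" unfolding t_def using bspec[OF c j0] v by (simp add: field_simps)
  have "v = r j0 / (r j0 / v)" using r_pos[OF j0] v by simp
  also have "\<dots> \<le> r j0 / ln (1 + r j0 / v)"
    using r_pos[OF j0] v
    by (intro divide_left_mono ln_add_one_self_le_self) (auto intro!: divide_pos_pos mult_pos_pos ln_gt_zero)
  also have "\<dots> \<le> rate_load A r (\<lambda>j. t * c j)" unfolding rate_load_def u[symmetric]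
    using \<open>0 < t\<close> c r_pos
    by (intro member_le_sum[OF j0 _ A_fin] divide_nonneg_nonneg) (auto intro: less_imp_le)
  finally show ?thesis using \<open>0 < t\<close> that by blast
qed

text \<open>Once every t c_j is at least exp(R/v) - 1, with R the total rate, term j is at most r_j v / R.\<close>
lemma rate_load_scaled_le:
  assumes c: "\<forall>j\<in>A. 0 < c j" and v: "0 < v" and "0 \<le> t0"
  obtains t where "t0 \<le> t" "rate_load A r (\<lambda>j. t * c j) \<le> v"
proof
  define R where "R = (\<Sum>j\<in>A. r j)"
  have "0 < R" unfolding R_def using r_pos by (intro sum_pos[OF A_fin A_ne])
  define E where "E = exp (R / v) - 1"
  have "0 < E" unfolding E_def using \<open>0 < R\<close> v by simp
  define t where "t = t0 + (\<Sum>j\<in>A. E / c j)"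
  show "t0 \<le> t" unfolding t_def using \<open>0 < E\<close> c by (simp add: sum_nonneg less_imp_le)
  have "rate_load A r (\<lambda>j. t * c j) \<le> (\<Sum>j\<in>A. r j / ln (1 + E))"
    unfolding rate_load_def
  proof (rule sum_mono)
    fix j assume j: "j \<in> A"
    have "E / c j \<le> t" unfolding t_def
      using member_le_sum[OF j, of "\<lambda>j. E / c j"] \<open>0 < E\<close> c A_fin \<open>0 \<le> t0\<close>
      by (simp add: less_imp_le)
    then have "E \<le> t * c j" using bspec[OF c j] by (simp add: field_simps)
    then show "r j / ln (1 + t * c j) \<le> r j / ln (1 + E)"
      using r_pos[OF j] \<open>0 < E\<close> by (intro divide_ln_add_one_antimono) auto
  qed
  also have "\<dots> = v" using \<open>0 < R\<close> v
    by (simp add: E_def sum_divide_distrib[symmetric] sum_distrib_right[symmetric] R_def[symmetric])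
  finally show "rate_load A r (\<lambda>j. t * c j) \<le> v" .
qed

lemma rate_load_scaled_eq_unique:
  assumes c: "\<forall>j\<in>A. 0 < c j" and v: "0 < v"
  shows "\<exists>!t. 0 < t \<and> rate_load A r (\<lambda>j. t * c j) = v"
proof -
  obtain t1 where t1: "0 < t1" "v \<le> rate_load A r (\<lambda>j. t1 * c j)"
    using rate_load_scaled_ge[OF c v] by blast
  obtain t2 where t2: "t1 \<le> t2" "rate_load A r (\<lambda>j. t2 * c j) \<le> v"
    using rate_load_scaled_le[OF c v, of t1] t1(1) by auto
  have "continuous_on {t1..t2} (\<lambda>t. rate_load A r (\<lambda>j. t * c j))"
    using continuous_on_rate_load_scaled[OF c] t1(1) by (elim continuous_on_subset) auto
  then obtain t where "t1 \<le> t" "t \<le> t2" "rate_load A r (\<lambda>j. t * c j) = v"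
    using IVT2'[OF t2(2) t1(2) t2(1)] by blast
  moreover have "t' = t" if "0 < t'" "0 < t" "rate_load A r (\<lambda>j. t' * c j) = rate_load A r (\<lambda>j. t * c j)"
    for t t'
    using that rate_load_strict_antimono[of "\<lambda>j. t * c j" "\<lambda>j. t' * c j"]
      rate_load_strict_antimono[of "\<lambda>j. t' * c j" "\<lambda>j. t * c j"] c
    by (cases t t' rule: linorder_cases) auto
  ultimately show ?thesis using t1(1) by (metis order_less_le_trans)
qed

end

lemma conditionally_complete_lattice_fixpoint:
  fixes h :: "'a::conditionally_complete_lattice \<Rightarrow> 'a"
  assumes mono: "\<And>q q'. a \<le> q \<Longrightarrow> q \<le> q' \<Longrightarrow> h q \<le> h q'"
    and "a \<le> b" and "a \<le> h a" and "h b \<le> b"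
  shows "\<exists>q. a \<le> q \<and> q \<le> b \<and> h q = q"
proof -
  define S where "S = {q. a \<le> q \<and> q \<le> b \<and> q \<le> h q}"
  define z where "z = Sup S"
  have "a \<in> S" using assms unfolding S_def by simp
  have upper: "q \<le> z" if "q \<in> S" for q
    unfolding z_def using that by (intro cSup_upper) (auto simp: S_def bdd_above_def)
  have "z \<le> b" unfolding z_def using \<open>a \<in> S\<close> by (intro cSup_least) (auto simp: S_def)
  have "a \<le> z" using upper[OF \<open>a \<in> S\<close>] .
  have "z \<le> h z"
    unfolding z_def using \<open>a \<in> S\<close>
  proof (intro cSup_least)
    fix q assume "q \<in> S"
    then show "q \<le> h (Sup S)"
      using mono[of q z] upper[of q] unfolding S_def z_def by (blast intro: order_trans)
  qed auto
  have "h z \<in> S"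
    using mono[OF \<open>a \<le> z\<close> \<open>z \<le> h z\<close>] mono[OF \<open>a \<le> z\<close> \<open>z \<le> b\<close>] mono[OF order_refl \<open>a \<le> z\<close>]
      assms(3,4) \<open>z \<le> h z\<close> \<open>a \<le> z\<close> unfolding S_def by (blast intro: order_trans)
  then have "h z \<le> z" by (rule upper)
  then show ?thesis using \<open>a \<le> z\<close> \<open>z \<le> b\<close> \<open>z \<le> h z\<close> by (blast intro: order_antisym)
qed

lemma open_positive_orthant: "open {y :: real^'n. \<forall>k. 0 < y$k}"
proof -
  have "{y :: real^'n. \<forall>k. 0 < y$k} = (\<Inter>k. {y. 0 < y$k})" by auto
  then show ?thesis by (auto intro!: open_INT open_halfspace_component_gt_cart)
qed

locale cellular_network =
  fixes J :: "'n::finite \<Rightarrow> 'u set" and g r :: "'n \<Rightarrow> 'u \<Rightarrow> real" and sigma2 :: real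
  assumes J_fin: "finite (J i)" and J_ne: "J i \<noteq> {}" and g_pos: "0 < g k j"
    and sigma_pos: "0 < sigma2" and r_pos: "j \<in> J i \<Longrightarrow> 0 < r i j"
begin

definition interf_noise :: "real^'n \<Rightarrow> real^'n \<Rightarrow> 'n \<Rightarrow> 'u \<Rightarrow> real" where
  "interf_noise y q i j = (\<Sum>k\<in>UNIV - {i}. q$k * g k j * y$k) + sigma2"

definition sinr_gain :: "real^'n \<Rightarrow> real^'n \<Rightarrow> 'n \<Rightarrow> 'u \<Rightarrow> real" where
  "sinr_gain y q i j = g i j / interf_noise y q i j"

lemma load_map_eq_rate_load:
  "load_map J g sigma2 y r q $ i = rate_load (J i) (r i) (\<lambda>j. q$i * sinr_gain y q i j)"
  by (simp add: load_map_def rate_load_def interf_noise_def sinr_gain_def)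

lemma interf_noise_pos: "0 \<le> y \<Longrightarrow> 0 \<le> q \<Longrightarrow> 0 < interf_noise y q i j"
  unfolding interf_noise_def less_eq_vec_def using g_pos sigma_pos
  by (intro add_nonneg_pos sum_nonneg mult_nonneg_nonneg) (auto intro: less_imp_le)

lemma interf_noise_mono: "0 \<le> y \<Longrightarrow> q \<le> q' \<Longrightarrow> interf_noise y q i j \<le> interf_noise y q' i j"
  unfolding interf_noise_def less_eq_vec_def using g_pos
  by (intro add_right_mono sum_mono mult_right_mono) (auto intro: less_imp_le)

lemma sinr_gain_pos: "0 \<le> y \<Longrightarrow> 0 \<le> q \<Longrightarrow> 0 < sinr_gain y q i j"
  unfolding sinr_gain_def using g_pos interf_noise_pos by simp

lemma sinr_gain_antimono:
  "0 \<le> y \<Longrightarrow> 0 \<le> q \<Longrightarrow> q \<le> q' \<Longrightarrow> sinr_gain y q' i j \<le> sinr_gain y q i j"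
  unfolding sinr_gain_def using g_pos interf_noise_pos interf_noise_mono
  by (intro divide_left_mono) (auto intro: less_imp_le mult_pos_pos)

definition required_power :: "real^'n \<Rightarrow> real^'n \<Rightarrow> real^'n" where
  "required_power y q =
     (\<chi> i. THE t. 0 < t \<and> rate_load (J i) (r i) (\<lambda>j. t * sinr_gain y q i j) = y$i)"

lemma required_power:
  assumes "\<forall>k. 0 < y$k" and "0 \<le> q"
  shows "0 < required_power y q $ i"
    and "rate_load (J i) (r i) (\<lambda>j. required_power y q $ i * sinr_gain y q i j) = y$i"
proof -
  have "0 \<le> y" using assms(1) by (simp add: less_eq_vec_def less_imp_le)
  then have "\<exists>!t. 0 < t \<and> rate_load (J i) (r i) (\<lambda>j. t * sinr_gain y q i j) = y$i"
    using assms sinr_gain_pos r_pos by (intro rate_load_scaled_eq_unique J_fin J_ne) auto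
  from theI'[OF this] show "0 < required_power y q $ i"
    and "rate_load (J i) (r i) (\<lambda>j. required_power y q $ i * sinr_gain y q i j) = y$i"
    by (simp_all add: required_power_def)
qed

lemma required_power_mono:
  assumes y: "\<forall>k. 0 < y$k" and "0 \<le> q" and "q \<le> q'"
  shows "required_power y q \<le> required_power y q'"
  unfolding less_eq_vec_def
proof
  fix i
  have "0 \<le> y" "0 \<le> q'" using assms by (auto simp: less_eq_vec_def less_imp_le intro: order_trans)
  define t t' where "t = required_power y q $ i" and "t' = required_power y q' $ i"
  note t = required_power[OF y \<open>0 \<le> q\<close>, of i, folded t_def]
  note t' = required_power[OF y \<open>0 \<le> q'\<close>, of i, folded t'_def]
  show "t \<le> t'"
  proof (rule ccontr)
    assume "\<not> t \<le> t'"
    have "y$i \<le> rate_load (J i) (r i) (\<lambda>j. t * sinr_gain y q' i j)"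
      unfolding t(2)[symmetric] using t(1) sinr_gain_pos sinr_gain_antimono assms \<open>0 \<le> y\<close> \<open>0 \<le> q'\<close>
      by (intro rate_load_antimono J_fin J_ne r_pos) (auto intro: mult_left_mono)
    also have "\<dots> < y$i"
      unfolding t'(2)[symmetric] using t'(1) \<open>\<not> t \<le> t'\<close> sinr_gain_pos \<open>0 \<le> y\<close> \<open>0 \<le> q'\<close>
      by (intro rate_load_strict_antimono J_fin J_ne r_pos) auto
    finally show False by simp
  qed
qed

lemma required_power_le:
  assumes y: "\<forall>k. 0 < y$k" and P: "\<forall>k. 0 < P$k" and "load_map J g sigma2 y r P \<le> y"
  shows "required_power y P \<le> P"
  unfolding less_eq_vec_def
proof
  fix i
  have "0 \<le> y" "0 \<le> P" using y P by (simp_all add: less_eq_vec_def less_imp_le)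
  define t where "t = required_power y P $ i"
  note t = required_power[OF y \<open>0 \<le> P\<close>, of i, folded t_def]
  show "t \<le> P$i"
  proof (rule ccontr)
    assume "\<not> t \<le> P$i"
    have "y$i = rate_load (J i) (r i) (\<lambda>j. t * sinr_gain y P i j)" using t(2) by simp
    also have "\<dots> < load_map J g sigma2 y r P $ i"
      unfolding load_map_eq_rate_load
      using \<open>\<not> t \<le> P$i\<close> P sinr_gain_pos[OF \<open>0 \<le> y\<close> \<open>0 \<le> P\<close>]
      by (intro rate_load_strict_antimono J_fin J_ne r_pos)
        (auto simp: less_eq_vec_def intro: mult_strict_right_mono)
    also have "\<dots> \<le> y$i" using assms(3) by (simp add: less_eq_vec_def)
    finally show False by simp
  qed
qed

text \<open>The required-power map is monotone on the box [0, P], so it has a fixed point there;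
  at a fixed point every station carries exactly its load.\<close>
lemma implementable_if_load_map_le:
  assumes y: "\<forall>k. 0 < y$k" and P: "\<forall>k. 0 < P$k" and le: "load_map J g sigma2 y r P \<le> y"
  shows "implementable J g sigma2 r y"
proof -
  obtain q where q: "0 \<le> q" "required_power y q = q"
    using conditionally_complete_lattice_fixpoint[of 0 "required_power y" P]
      required_power_mono[OF y] required_power_le[OF y P le] required_power(1)[OF y] P
    by (auto simp: less_eq_vec_def less_imp_le)
  have "0 < q$k" for k using required_power(1)[OF y q(1), of k] q(2) by simp
  moreover have "y = load_map J g sigma2 y r q"
    using required_power(2)[OF y q(1)] q(2) by (simp add: vec_eq_iff load_map_eq_rate_load)
  ultimately show ?thesis using y unfolding implementable_def by (auto intro: less_imp_le)
qed

lemma load_map_double_power_less: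
  assumes x: "0 \<le> x" and p: "\<forall>k. 0 < p$k" and x_fix: "x = load_map J g sigma2 x r p"
  shows "load_map J g sigma2 x r (2 *\<^sub>R p) $ i < x$i"
proof -
  have "0 \<le> p" using p by (simp add: less_eq_vec_def less_imp_le)
  have "rate_load (J i) (r i) (\<lambda>j. (2 *\<^sub>R p)$i * sinr_gain x (2 *\<^sub>R p) i j)
      < rate_load (J i) (r i) (\<lambda>j. p$i * sinr_gain x p i j)"
  proof (intro rate_load_strict_antimono J_fin J_ne r_pos conjI)
    fix j
    define A where "A = interf_noise x p i j - sigma2"
    have "0 \<le> A" using x \<open>0 \<le> p\<close> g_pos unfolding A_def interf_noise_def less_eq_vec_def
      by (auto intro!: sum_nonneg mult_nonneg_nonneg intro: less_imp_le)
    have "interf_noise x (2 *\<^sub>R p) i j = 2 * A + sigma2"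
      unfolding A_def interf_noise_def by (simp add: sum_distrib_left mult.assoc)
    moreover have "interf_noise x p i j = A + sigma2" unfolding A_def by simp
    moreover have "0 < p$i * g i j" using p g_pos by simp
    ultimately show "p$i * sinr_gain x p i j < (2 *\<^sub>R p)$i * sinr_gain x (2 *\<^sub>R p) i j"
      and "0 < p$i * sinr_gain x p i j"
      unfolding sinr_gain_def using \<open>0 \<le> A\<close> sigma_pos by (simp_all add: field_simps)
  qed
  then show ?thesis
    using arg_cong[OF x_fix, of "\<lambda>v. v$i"] by (simp only: load_map_eq_rate_load)
qed

lemma continuous_on_load_map:
  assumes P: "\<forall>k. 0 < P$k"
  shows "continuous_on {y. 0 \<le> y} (\<lambda>y. load_map J g sigma2 y r P)"
  unfolding load_map_def
proof (intro continuous_on_vec_lambda continuous_intros ballI)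
  fix i j and y :: "real^'n" assume "y \<in> {y. 0 \<le> y}"
  then have D: "0 < (\<Sum>k\<in>UNIV - {i}. P$k * g k j * y$k) + sigma2"
    using P interf_noise_pos unfolding interf_noise_def by (simp add: less_eq_vec_def less_imp_le)
  then show "(\<Sum>k\<in>UNIV - {i}. P$k * g k j * y$k) + sigma2 \<noteq> 0" by simp
  have "0 < P$i * g i j / ((\<Sum>k\<in>UNIV - {i}. P$k * g k j * y$k) + sigma2)"
    using P g_pos D by simp
  then show "1 + P$i * g i j / ((\<Sum>k\<in>UNIV - {i}. P$k * g k j * y$k) + sigma2) \<noteq> 0"
    and "ln (1 + P$i * g i j / ((\<Sum>k\<in>UNIV - {i}. P$k * g k j * y$k) + sigma2)) \<noteq> 0"
    by auto
qed

lemma open_implementable: "open {y. implementable J g sigma2 r y}"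
proof (subst open_subopen, intro ballI)
  fix x assume "x \<in> {y. implementable J g sigma2 r y}"
  then obtain p where x: "0 \<le> x" and p: "\<forall>k. 0 < p$k" and x_fix: "x = load_map J g sigma2 x r p"
    unfolding implementable_def less_eq_vec_def by auto
  define P where "P = 2 *\<^sub>R p"
  have P: "\<forall>k. 0 < P$k" unfolding P_def using p by simp
  define S where "S = {y :: real^'n. \<forall>k. 0 < y$k}"
  define U where "U = S \<inter> (\<lambda>y. y - load_map J g sigma2 y r P) -` S"
  have "open U" unfolding U_def S_def
    using continuous_on_load_map[OF P]
    by (intro continuous_open_preimage open_positive_orthant continuous_intros)
      (auto elim!: continuous_on_subset simp: less_eq_vec_def less_imp_le)
  moreover have "x \<in> U"
  proof -
    have "0 \<le> p" using p by (simp add: less_eq_vec_def less_imp_le)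
    have "0 < x$k" for k
      unfolding arg_cong[OF x_fix, of "\<lambda>v. v$k"] load_map_eq_rate_load
      using p sinr_gain_pos[OF x \<open>0 \<le> p\<close>] by (intro rate_load_pos J_fin J_ne r_pos) auto
    then show ?thesis unfolding U_def S_def P_def
      using load_map_double_power_less[OF x p x_fix] by simp
  qed
  moreover have "U \<subseteq> {y. implementable J g sigma2 r y}"
    unfolding U_def S_def
    by (auto intro!: implementable_if_load_map_le[OF _ P] simp: less_eq_vec_def less_imp_le)
  ultimately show "\<exists>U. open U \<and> x \<in> U \<and> U \<subseteq> {y. implementable J g sigma2 r y}" by blast
qed

end

lemma is_norm_zero: "is_norm N \<Longrightarrow> N 0 = 0"
  unfolding is_norm_def by blast

lemma is_norm_sum:
  assumes N: "is_norm N" and "finite A"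
  shows "N (\<Sum>i\<in>A. f i) \<le> (\<Sum>i\<in>A. N (f i))"
  using assms(2)
proof (induction A rule: finite_induct)
  case empty
  then show ?case using is_norm_zero[OF N] by simp
next
  case (insert a A)
  then show ?case using N unfolding is_norm_def
    by (simp add: sum.insert) (meson add_left_mono order_trans)
qed

lemma is_norm_uminus: "is_norm N \<Longrightarrow> N (- v) = N v"
  unfolding is_norm_def by (metis abs_minus_cancel abs_one mult_1 scaleR_minus1_left)

lemma is_norm_nonneg:
  assumes N: "is_norm N" shows "0 \<le> N v"
proof -
  have "N 0 \<le> N v + N (- v)"
    using N unfolding is_norm_def by (metis add.right_inverse)
  then show ?thesis using is_norm_zero[OF N] is_norm_uminus[OF N] by simp
qed

lemma is_norm_reverse_triangle:
  assumes N: "is_norm N" shows "\<bar>N u - N v\<bar> \<le> N (u - v)"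
proof -
  have "N u \<le> N (u - v) + N v" "N v \<le> N (v - u) + N u"
    using N unfolding is_norm_def by (metis diff_add_cancel)+
  moreover have "N (v - u) = N (u - v)" using is_norm_uminus[OF N, of "u - v"] by simp
  ultimately show ?thesis by linarith
qed

lemma is_norm_le_norm:
  fixes N :: "real^'n \<Rightarrow> real"
  assumes N: "is_norm N"
  obtains K where "0 \<le> K" "\<And>v. N v \<le> K * norm v"
proof
  define K where "K = (\<Sum>i\<in>UNIV. N (axis i (1::real)))"
  show "0 \<le> K" unfolding K_def by (rule sum_nonneg) (simp add: is_norm_nonneg[OF N])
  fix v :: "real^'n"
  have "N v = N (\<Sum>i\<in>UNIV. v$i *\<^sub>R axis i 1)"
    using basis_expansion[of v] by (simp add: scalar_mult_eq_scaleR)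
  also have "\<dots> \<le> (\<Sum>i\<in>UNIV. \<bar>v$i\<bar> * N (axis i 1))"
    using is_norm_sum[OF N, of UNIV "\<lambda>i. v$i *\<^sub>R axis i 1"] N
    unfolding is_norm_def by simp
  also have "\<dots> \<le> (\<Sum>i\<in>UNIV. norm v * N (axis i 1))"
    by (intro sum_mono mult_right_mono component_le_norm_cart is_norm_nonneg[OF N])
  also have "\<dots> = K * norm v" by (simp add: K_def sum_distrib_left mult.commute)
  finally show "N v \<le> K * norm v" .
qed

lemma is_norm_continuous:
  fixes N :: "real^'n \<Rightarrow> real"
  assumes N: "is_norm N"
  shows "continuous_on S N"
proof -
  obtain K where K: "0 \<le> K" "\<And>v. N v \<le> K * norm v" using is_norm_le_norm[OF N] by blast
  have "K-lipschitz_on UNIV N"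
  proof (rule lipschitz_onI)
    fix u v :: "real^'n"
    have "\<bar>N u - N v\<bar> \<le> N (u - v)" by (rule is_norm_reverse_triangle[OF N])
    also have "\<dots> \<le> K * norm (u - v)" by (rule K(2))
    finally show "dist (N u) (N v) \<le> K * dist u v" by (simp add: dist_norm dist_real_def)
  qed (rule K(1))
  then show ?thesis
    using lipschitz_on_continuous_on continuous_on_subset by blast
qed

text \<open>Equivalence of norms in finite dimension, one direction: minimise N over the
  compact Euclidean unit sphere.\<close>
lemma is_norm_ge_norm:
  fixes N :: "real^'n \<Rightarrow> real"
  assumes N: "is_norm N"
  obtains m where "0 < m" "\<And>v. m * norm v \<le> N v"
proof -
  obtain i0 :: 'n where True by simp
  have "sphere (0::real^'n) 1 \<noteq> {}"
    using norm_axis_1[of i0] by (metis mem_sphere_0 empty_iff)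
  then obtain z where z: "z \<in> sphere 0 1" and zmin: "\<And>w. w \<in> sphere 0 1 \<Longrightarrow> N z \<le> N w"
    using continuous_attains_inf[OF compact_sphere _ is_norm_continuous[OF N]] by blast
  show ?thesis
  proof
    have "z \<noteq> 0" using z by auto
    then show "0 < N z" using N is_norm_nonneg[OF N, of z] unfolding is_norm_def
      by (simp add: order_less_le)
    fix v :: "real^'n"
    show "N z * norm v \<le> N v"
    proof (cases "v = 0")
      case True then show ?thesis using is_norm_nonneg[OF N] by simp
    next
      case False
      then have "N z \<le> N (inverse (norm v) *\<^sub>R v)" by (intro zmin) simp
      also have "\<dots> = N v / norm v" using N unfolding is_norm_def by (simp add: divide_inverse mult.commute)
      finally show ?thesis using False by (simp add: field_simps)
    qed
  qed
qed

lemma is_norm_ball_subset_open: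
  fixes N :: "real^'n \<Rightarrow> real"
  assumes N: "is_norm N" and "open U" and "x \<in> U"
  shows "\<exists>\<delta>>0. \<forall>x'. N (x' - x) \<le> \<delta> \<longrightarrow> x' \<in> U"
proof -
  obtain e where e: "0 < e" "ball x e \<subseteq> U" using assms(2,3) open_contains_ball by blast
  obtain m where m: "0 < m" "\<And>v. m * norm v \<le> N v" using is_norm_ge_norm[OF N] by blast
  have "x' \<in> U" if "N (x' - x) \<le> m * e / 2" for x'
  proof -
    have "m * norm (x' - x) \<le> m * (e / 2)" using m(2)[of "x' - x"] that by simp
    then have "dist x x' < e" using m(1) e(1) by (simp add: dist_norm norm_minus_commute)
    then show ?thesis using e(2) by (meson mem_ball subsetD)
  qed
  moreover have "0 < m * e / 2" using m(1) e(1) by simp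
  ultimately show ?thesis by blast
qed

theorem theorem4:
  fixes J :: "'n::finite \<Rightarrow> 'u set" and g r :: "'n \<Rightarrow> 'u \<Rightarrow> real"
    and sigma2 :: real and x p :: "real^'n"
  assumes J_fin: "\<And>i. finite (J i)"
    and J_ne: "\<And>i. J i \<noteq> {}"
    and J_disj: "\<And>i i'. i \<noteq> i' \<Longrightarrow> J i \<inter> J i' = {}"
    and g_pos: "\<And>k j. 0 < g k j"
    and sigma_pos: "0 < sigma2"
    and r_pos: "\<And>i j. j \<in> J i \<Longrightarrow> 0 < r i j"
    and r_sat: "satisfiable J g r"
    and x_nonneg: "\<And>i. 0 \<le> x $ i"
    and p_pos: "\<And>i. 0 < p $ i"
    and x_fix: "x = load_map J g sigma2 x r p"
  shows "(\<forall>N. is_norm N \<longrightarrow> (\<exists>\<delta>>0. \<forall>x'. N (x' - x) \<le> \<delta> \<longrightarrow> implementable J g sigma2 r x'))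
     \<and> open {y. implementable J g sigma2 r y}"
proof -
  interpret cellular_network J g r sigma2
    using J_fin J_ne g_pos sigma_pos r_pos by unfold_locales
  have "x \<in> {y. implementable J g sigma2 r y}"
    unfolding implementable_def using x_nonneg p_pos x_fix by blast
  then show ?thesis
    using open_implementable is_norm_ball_subset_open[OF _ open_implementable] by blast
qed

end
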